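(* Against a non-adaptive adversary, every online algorithm (deterministic or randomized) has competitive ratio $\Omega(\log n)$ with respect to the \textsc{Min-Max} objective, where $n$ is the number of agents.
   Context: An instance $\mathcal{I}=(N,P,T,(\mathbf{D}_i)_{i\in N})$ has agents $N=[n]$, projects $P$, timesteps $T=[\ell]$, and disapproval sets $D_{ik}\subseteq P$. An outcome is $\mathbf{o}\in P^\ell$ and $d_i(\mathbf{o})=|\{k\in T:o_k\in D_{ik}\}|$. An online algorithm chooses each $o_k$ (possibly at random) based only on $(D_{it})_{i\in N,t\in[k]}$. A non-adaptive adversary fixes the (possibly randomly drawn) instance without access to the algorithm's random choices. The competitive ratio of $\mathcal{B}$ with respect to \textsc{Min-Max} is the supremum over instances of the ratio between the (expected) value $\max_i d_i(\mathcal{B}(\mathcal{I}))$ and the optimum $\min_{\mathbf{o}}\max_i d_i(\mathbf{o})$. *)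

theory Defs
  imports "HOL-Probability.Probability"
begin

text \<open>Agents are 0..<n, projects are natural numbers (a finite nonempty set P),
  timesteps are 0..<l. A disapproval profile is D :: agent => timestep => project set.\<close>

type_synonym profile = "nat \<Rightarrow> nat \<Rightarrow> nat set"

definition dis :: "profile \<Rightarrow> nat \<Rightarrow> nat list \<Rightarrow> nat" where
  "dis D i os = card {k. k < length os \<and> os ! k \<in> D i k}"

definition maxdis :: "nat \<Rightarrow> profile \<Rightarrow> nat list \<Rightarrow> nat" where
  "maxdis n D os = Max ((\<lambda>i. dis D i os) ` {0..<n})"

definition outcomes :: "nat set \<Rightarrow> nat \<Rightarrow> nat list set" where
  "outcomes P l = {os. length os = l \<and> set os \<subseteq> P}"

definition opt :: "nat \<Rightarrow> nat set \<Rightarrow> nat \<Rightarrow> profile \<Rightarrow> nat" where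
  "opt n P l D = Min (maxdis n D ` outcomes P l)"

text \<open>A (possibly randomized) online algorithm, as a behavioural strategy: given the
  project set, the disapproval sets of all agents at timesteps 0..k (one function
  agent => set per timestep) and its own previous choices o_0..o_{k-1}, it outputs a
  distribution over the project chosen at timestep k.\<close>

type_synonym alg = "nat set \<Rightarrow> (nat \<Rightarrow> nat set) list \<Rightarrow> nat list \<Rightarrow> nat pmf"

definition valid_alg :: "alg \<Rightarrow> bool" where
  "valid_alg A \<longleftrightarrow> (\<forall>P hs os. finite P \<and> P \<noteq> {} \<longrightarrow> set_pmf (A P hs os) \<subseteq> P)"

definition prefix_profiles :: "nat \<Rightarrow> profile \<Rightarrow> nat \<Rightarrow> (nat \<Rightarrow> nat set) list" where
  "prefix_profiles n D k = map (\<lambda>t i. if i < n then D i t else {}) [0..<Suc k]"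

fun run :: "alg \<Rightarrow> nat \<Rightarrow> nat set \<Rightarrow> profile \<Rightarrow> nat \<Rightarrow> nat list pmf" where
  "run A n P D 0 = return_pmf []"
| "run A n P D (Suc k) =
     bind_pmf (run A n P D k)
       (\<lambda>os. map_pmf (\<lambda>p. os @ [p]) (A P (prefix_profiles n D k) os))"

definition instances :: "nat \<Rightarrow> (nat set \<times> nat \<times> profile) set" where
  "instances n = {(P, l, D). finite P \<and> P \<noteq> {} \<and> (\<forall>i<n. \<forall>k<l. D i k \<subseteq> P)}"

definition exp_cost :: "alg \<Rightarrow> nat \<Rightarrow> nat set \<Rightarrow> nat \<Rightarrow> profile \<Rightarrow> real" where
  "exp_cost A n P l D = measure_pmf.expectation (run A n P D l) (\<lambda>os. real (maxdis n D os))"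

definition comp_ratio :: "alg \<Rightarrow> nat \<Rightarrow> ereal" where
  "comp_ratio A n = (SUP x \<in> instances n.
      (case x of (P, l, D) \<Rightarrow> ereal (exp_cost A n P l D / real (opt n P l D))))"

end

theory Submission
  imports Defs
begin

(* Read agents i < 2^m as bit strings of length m and let the projects be 0 and 1. Relative to
   a hidden string b, agent i is active at step t while its first t bits agree with b, and an
   active agent disapproves of project bit i t. Playing the complement of b hits every agent at
   most once (at the step where it leaves b), while at step 0 agent o_0 disapproves of o_0, so
   the optimum is 1. The adversary sets b t to the project the algorithm picks at step t with
   probability at least 1/2 against the instance built from the earlier bits; the agent spelling
   b is active throughout and so expects at least m/2 disapprovals, where m = floor (log2 n). *)

lemma length_run: "os \<in> set_pmf (run A n P D k) \<Longrightarrow> length os = k"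
  by (induction k arbitrary: os) auto

lemma set_run_subset:
  assumes "valid_alg A" "finite P" "P \<noteq> {}"
  shows "os \<in> set_pmf (run A n P D k) \<Longrightarrow> set os \<subseteq> P"
proof (induction k arbitrary: os)
  case (Suc k)
  then obtain os' p where "os' \<in> set_pmf (run A n P D k)" "os = os' @ [p]"
    and "p \<in> set_pmf (A P (prefix_profiles n D k) os')" by auto
  moreover from this(3) have "p \<in> P" using assms unfolding valid_alg_def by blast
  ultimately show ?case using Suc.IH by auto
qed simp

lemma finite_set_pmf_run:
  assumes "valid_alg A" "finite P" "P \<noteq> {}"
  shows "finite (set_pmf (run A n P D k))"
proof (rule finite_subset)
  show "set_pmf (run A n P D k) \<subseteq> {os. set os \<subseteq> P \<and> length os = k}"
    using length_run set_run_subset[OF assms] by blast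
  show "finite {os. set os \<subseteq> P \<and> length os = k}"
    using assms(2) by (rule finite_lists_length_eq)
qed

lemma map_take_run: "k \<le> j \<Longrightarrow> map_pmf (take k) (run A n P D j) = run A n P D k"
proof (induction j)
  case 0
  then show ?case by simp
next
  case (Suc j)
  show ?case
  proof (cases "k = Suc j")
    case True
    have "map_pmf (take k) (run A n P D (Suc j)) = run A n P D (Suc j)"
      by (rule map_pmf_idI) (metis True length_run order_refl take_all)
    with True show ?thesis by simp
  next
    case False
    with Suc.prems have "k \<le> j" by simp
    then have "map_pmf (take k) (run A n P D (Suc j)) = map_pmf (take k) (run A n P D j)"
      by (auto simp: map_bind_pmf pmf.map_comp o_def map_pmf_def[of "take k"] length_run
               intro!: bind_pmf_cong)
    with Suc.IH \<open>k \<le> j\<close> show ?thesis by simp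
  qed
qed

lemma prob_run_nth:
  assumes "t < j"
  shows "measure_pmf.prob (run A n P D j) {os. Q (os ! t)} =
         measure_pmf.prob (run A n P D (Suc t)) {os. Q (os ! t)}"
proof -
  have "{os. Q (os ! t)} = take (Suc t) -` {os. Q (os ! t)}" by auto
  then have "measure_pmf.prob (run A n P D j) {os. Q (os ! t)} =
             measure_pmf.prob (map_pmf (take (Suc t)) (run A n P D j)) {os. Q (os ! t)}"
    by simp
  with assms show ?thesis by (simp add: map_take_run)
qed

lemma run_cong:
  "(\<And>k. k < j \<Longrightarrow> prefix_profiles n D k = prefix_profiles n D' k) \<Longrightarrow>
   run A n P D j = run A n P D' j"
  by (induction j) auto

lemma dis_le_maxdis: "i < n \<Longrightarrow> dis D i os \<le> maxdis n D os"
  unfolding maxdis_def by (intro Max_ge) auto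

lemma maxdis_le: "0 < n \<Longrightarrow> (\<And>i. i < n \<Longrightarrow> dis D i os \<le> c) \<Longrightarrow> maxdis n D os \<le> c"
  unfolding maxdis_def by (subst Max_le_iff) auto

lemma real_dis_eq_sum_indicator:
  "real (dis D i os) = (\<Sum>k<length os. indicator {os'. os' ! k \<in> D i k} os)"
proof -
  have "(\<Sum>k<length os. indicator {os'. os' ! k \<in> D i k} os) =
        (\<Sum>k<length os. if os ! k \<in> D i k then 1 else 0 :: real)"
    by (intro sum.cong) (auto simp: indicator_def)
  also have "\<dots> = (\<Sum>k \<in> {k \<in> {..<length os}. os ! k \<in> D i k}. 1)"
    by (rule sum.inter_filter[symmetric]) simp
  also have "\<dots> = real (dis D i os)"
    unfolding dis_def real_of_card by (rule sum.cong) auto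
  finally show ?thesis ..
qed

lemma expectation_dis_run:
  assumes "valid_alg A" "finite P" "P \<noteq> {}"
  shows "measure_pmf.expectation (run A n P D l) (\<lambda>os. real (dis D i os)) =
         (\<Sum>k<l. measure_pmf.prob (run A n P D l) {os. os ! k \<in> D i k})"
proof -
  let ?M = "run A n P D l"
  have "measure_pmf.expectation ?M (\<lambda>os. real (dis D i os)) =
        measure_pmf.expectation ?M (\<lambda>os. \<Sum>k<l. indicator {os. os ! k \<in> D i k} os)"
    by (intro integral_cong_AE AE_pmfI) (auto simp: real_dis_eq_sum_indicator length_run)
  also have "\<dots> = (\<Sum>k<l. measure_pmf.prob ?M {os. os ! k \<in> D i k})"
    using integrable_measure_pmf_finite[OF finite_set_pmf_run[OF assms]]
    by (subst Bochner_Integration.integral_sum) auto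
  finally show ?thesis .
qed

lemma expectation_dis_le_exp_cost:
  assumes "valid_alg A" "finite P" "P \<noteq> {}" "i < n"
  shows "measure_pmf.expectation (run A n P D l) (\<lambda>os. real (dis D i os)) \<le> exp_cost A n P l D"
  unfolding exp_cost_def
  using integrable_measure_pmf_finite[OF finite_set_pmf_run[OF assms(1-3)]] dis_le_maxdis[OF assms(4)]
  by (intro integral_mono) auto

lemma finite_outcomes: "finite P \<Longrightarrow> finite (outcomes P l)"
  unfolding outcomes_def using finite_lists_length_eq[of P l] by (simp add: conj_commute)

lemma ratio_le_comp_ratio:
  "(P, l, D) \<in> instances n \<Longrightarrow> ereal (exp_cost A n P l D / real (opt n P l D)) \<le> comp_ratio A n"
  unfolding comp_ratio_def by (rule SUP_upper2) auto

lemma prob_majority_value: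
  fixes M :: "'a pmf" and f :: "'a \<Rightarrow> nat"
  assumes "\<And>x. x \<in> set_pmf M \<Longrightarrow> f x \<in> {0, 1}"
  shows "1/2 \<le> measure_pmf.prob M {x. f x = of_bool (1/2 \<le> measure_pmf.prob M {x. f x = 1})}"
proof (cases "1/2 \<le> measure_pmf.prob M {x. f x = 1}")
  case True
  then show ?thesis by simp
next
  case False
  have "measure_pmf.prob M {x. f x = 0} = measure_pmf.prob M (UNIV - {x. f x = 1})"
  proof (rule measure_prob_cong_0)
    show "pmf M x = 0" if "x \<in> {x. f x = 0} - (UNIV - {x. f x = 1})" for x
      using that by simp
    show "pmf M x = 0" if "x \<in> (UNIV - {x. f x = 1}) - {x. f x = 0}" for x
      using that assms[of x] by (auto simp: set_pmf_iff)
  qed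
  also have "\<dots> = 1 - measure_pmf.prob M {x. f x = 1}"
    using measure_pmf.prob_compl[of "{x. f x = 1}" M] by simp
  finally show ?thesis using False by simp
qed

definition adversary_profile :: "nat \<Rightarrow> (nat \<Rightarrow> bool) \<Rightarrow> profile" where
  "adversary_profile m b i t =
     (if i < 2 ^ m \<and> t < m \<and> (\<forall>s<t. bit i s = b s) then {of_bool (bit i t)} else {})"

lemma adversary_profile_in_instances: "({0, 1}, m, adversary_profile m b) \<in> instances n"
  unfolding instances_def adversary_profile_def by auto

lemma prefix_profiles_adversary_profile_cong:
  "(\<And>s. s < k \<Longrightarrow> b s = b' s) \<Longrightarrow>
   prefix_profiles n (adversary_profile m b) k = prefix_profiles n (adversary_profile m b') k"
  unfolding prefix_profiles_def adversary_profile_def by (intro map_cong refl ext) auto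

lemma exists_agent_with_bits: "\<exists>i<2 ^ m. \<forall>s<m. bit (i::nat) s = b s"
proof -
  define i :: nat where "i = horner_sum of_bool 2 (map b [0..<m])"
  have "i < 2 ^ m"
    using horner_sum_of_bool_2_less[of "map b [0..<m]"] unfolding i_def by simp
  moreover have "bit i s = b s" if "s < m" for s
    using that unfolding i_def by (simp add: bit_horner_sum_bit_iff)
  ultimately show ?thesis by blast
qed

lemma adversary_profile_along_bits:
  "i < 2 ^ m \<Longrightarrow> \<forall>s<m. bit i s = b s \<Longrightarrow> k < m \<Longrightarrow> adversary_profile m b i k = {of_bool (b k)}"
  unfolding adversary_profile_def by auto

lemma dis_adversary_profile_opposite_le_1:
  "dis (adversary_profile m b) i (map (\<lambda>t. of_bool (\<not> b t)) [0..<m]) \<le> 1"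
proof -
  let ?w = "map (\<lambda>t. of_bool (\<not> b t)) [0..<m] :: nat list"
  let ?S = "{k. k < length ?w \<and> ?w ! k \<in> adversary_profile m b i k}"
  have hit: "bit i k \<noteq> b k \<and> (\<forall>s<k. bit i s = b s)" if "k \<in> ?S" for k
  proof -
    from that have "k < m" "?w ! k \<in> adversary_profile m b i k" by auto
    then have "of_bool (\<not> b k) \<in> adversary_profile m b i k" by simp
    then show ?thesis
      unfolding adversary_profile_def by (cases "b k"; cases "bit i k") (auto split: if_splits)
  qed
  have unique: "k = k'" if "k \<in> ?S" "k' \<in> ?S" for k k'
  proof (rule ccontr)
    assume "k \<noteq> k'"
    then consider "k < k'" | "k' < k" by linarith
    then show False
      using hit[OF that(1)] hit[OF that(2)] by cases blast+
  qed
  have "finite ?S" by simp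
  with unique have "card ?S \<le> Suc 0" using card_le_Suc0_iff_eq by blast
  then show ?thesis unfolding dis_def by simp
qed

lemma one_le_maxdis_adversary_profile:
  assumes "1 \<le> m" "2 ^ m \<le> n" "length os = m" "set os \<subseteq> {0, 1}"
  shows "1 \<le> maxdis n (adversary_profile m b) os"
proof -
  let ?j = "os ! 0"
  have "?j \<in> set os" using assms(1,3) by simp
  with assms(4) have j: "?j \<in> {0, 1}" by blast
  have "(2::nat) \<le> 2 ^ m" using assms(1) by (metis power_increasing power_one_right one_le_numeral)
  with j assms(2) have "?j < 2 ^ m" "?j < n" by auto
  with j assms(1,3) have "0 \<in> {k. k < length os \<and> os ! k \<in> adversary_profile m b ?j k}"
    by (auto simp: adversary_profile_def bit_0)
  then have "0 < dis (adversary_profile m b) ?j os"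
    unfolding dis_def by (subst card_gt_0_iff) auto
  then have "1 \<le> dis (adversary_profile m b) ?j os" by simp
  also have "\<dots> \<le> maxdis n (adversary_profile m b) os"
    using \<open>?j < n\<close> by (rule dis_le_maxdis)
  finally show ?thesis .
qed

lemma opt_adversary_profile:
  assumes "1 \<le> m" "2 ^ m \<le> n"
  shows "opt n {0, 1} m (adversary_profile m b) = 1"
  unfolding opt_def
proof (rule Min_eqI)
  let ?w = "map (\<lambda>t. of_bool (\<not> b t)) [0..<m] :: nat list"
  show "finite (maxdis n (adversary_profile m b) ` outcomes {0, 1} m)"
    by (simp add: finite_outcomes)
  show "1 \<le> y" if "y \<in> maxdis n (adversary_profile m b) ` outcomes {0, 1} m" for y
    using that one_le_maxdis_adversary_profile[OF assms] by (auto simp: outcomes_def)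
  have "?w \<in> outcomes {0, 1} m" by (auto simp: outcomes_def)
  moreover have "0 < n"
    using assms(2) less_le_trans[of 0 "2 ^ m" n] by simp
  then have "maxdis n (adversary_profile m b) ?w \<le> 1"
    using dis_adversary_profile_opposite_le_1 by (rule maxdis_le)
  moreover have "1 \<le> maxdis n (adversary_profile m b) ?w"
    by (rule one_le_maxdis_adversary_profile[OF assms]) auto
  ultimately show "1 \<in> maxdis n (adversary_profile m b) ` outcomes {0, 1} m"
    by (intro rev_image_eqI[of ?w]) auto
qed

(* Only the distribution of the algorithm's choices enters, never their outcomes: the instance
   is fixed in advance, as a non-adaptive adversary must do. *)
fun adversary_bits :: "alg \<Rightarrow> nat \<Rightarrow> nat \<Rightarrow> nat \<Rightarrow> nat \<Rightarrow> bool" where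
  "adversary_bits A n m 0 = (\<lambda>_. False)"
| "adversary_bits A n m (Suc t) = (adversary_bits A n m t)(t :=
     1/2 \<le> measure_pmf.prob
       (run A n {0, 1} (adversary_profile m (adversary_bits A n m t)) (Suc t)) {os. os ! t = 1})"

lemma adversary_bits_stable:
  "t \<le> u \<Longrightarrow> s < t \<Longrightarrow> adversary_bits A n m u s = adversary_bits A n m t s"
  by (induction u) (auto simp: le_Suc_eq)

lemma prob_adversary_bits:
  assumes "valid_alg A" "t < m"
  shows "1/2 \<le> measure_pmf.prob (run A n {0, 1} (adversary_profile m (adversary_bits A n m m)) m)
                   {os. os ! t = of_bool (adversary_bits A n m m t)}"
proof -
  let ?b = "adversary_bits A n m m"
  let ?M = "run A n {0, 1} (adversary_profile m (adversary_bits A n m t)) (Suc t)"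
  have "run A n {0, 1} (adversary_profile m ?b) (Suc t) = ?M"
    using adversary_bits_stable[of _ m _ A n m] assms(2)
    by (intro run_cong prefix_profiles_adversary_profile_cong) auto
  moreover have "?b t = (1/2 \<le> measure_pmf.prob ?M {os. os ! t = 1})"
    using adversary_bits_stable[of "Suc t" m t A n m] assms(2) by simp
  moreover have "os ! t \<in> {0, 1}" if "os \<in> set_pmf ?M" for os
    using set_run_subset[OF assms(1) _ _ that] length_run[OF that] by (simp add: subset_iff)
  ultimately show ?thesis
    using prob_run_nth[OF assms(2), where Q = "\<lambda>p. p = of_bool (?b t)"]
      prob_majority_value[of ?M "\<lambda>os. os ! t"] by simp
qed

lemma exp_cost_adversary_profile_ge:
  assumes "valid_alg A" "2 ^ m \<le> n"
  shows "real m / 2 \<le> exp_cost A n {0, 1} m (adversary_profile m (adversary_bits A n m m))"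
proof -
  define b where "b = adversary_bits A n m m"
  let ?M = "run A n {0, 1} (adversary_profile m b) m"
  obtain i :: nat where i: "i < 2 ^ m" "\<forall>s<m. bit i s = b s"
    using exists_agent_with_bits by blast
  have "real m / 2 = (\<Sum>t<m. 1/2)" by simp
  also have "\<dots> \<le> (\<Sum>t<m. measure_pmf.prob ?M {os. os ! t \<in> adversary_profile m b i t})"
    using prob_adversary_bits[OF assms(1)] adversary_profile_along_bits[OF i]
    unfolding b_def by (intro sum_mono) simp
  also have "\<dots> = measure_pmf.expectation ?M (\<lambda>os. real (dis (adversary_profile m b) i os))"
    using assms(1) by (simp add: expectation_dis_run)
  also have "\<dots> \<le> exp_cost A n {0, 1} m (adversary_profile m b)"
    using assms i(1) by (intro expectation_dis_le_exp_cost) auto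
  finally show ?thesis unfolding b_def .
qed

lemma ln_le_twice_exponent:
  assumes "0 < n" "n < 2 ^ Suc m" "1 \<le> m"
  shows "ln (real n) \<le> 2 * real m"
proof -
  have "ln (real n) < ln (2 ^ Suc m)"
    using assms(1,2) by (subst ln_less_cancel_iff) (auto simp del: power_Suc)
  also have "\<dots> = real (Suc m) * ln 2"
    by (simp add: ln_realpow del: power_Suc)
  also have "\<dots> \<le> real (Suc m)"
    using ln_2_less_1 by (simp add: mult_left_le)
  finally show ?thesis using assms(3) by simp
qed

theorem proposition4:
  shows "\<exists>c>0. \<exists>N. \<forall>n\<ge>N. \<forall>A. valid_alg A \<longrightarrow> comp_ratio A n \<ge> ereal (c * ln (real n))"
proof (intro exI[of _ "1/4"] conjI exI[of _ 2] allI impI, simp)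
  fix n :: nat and A assume "2 \<le> n" and A: "valid_alg A"
  obtain m where m: "2 ^ m \<le> n" "n < 2 ^ Suc m"
    using ex_power_ivl1[of 2 n] \<open>2 \<le> n\<close> by auto
  with \<open>2 \<le> n\<close> have "1 \<le> m" by (cases m) auto
  let ?D = "adversary_profile m (adversary_bits A n m m)"
  have "1/4 * ln (real n) \<le> exp_cost A n {0, 1} m ?D / real (opt n {0, 1} m ?D)"
    using exp_cost_adversary_profile_ge[OF A m(1)] opt_adversary_profile[OF \<open>1 \<le> m\<close> m(1)]
      ln_le_twice_exponent[OF _ m(2) \<open>1 \<le> m\<close>] \<open>2 \<le> n\<close> by simp
  also have "ereal \<dots> \<le> comp_ratio A n"
    by (rule ratio_le_comp_ratio[OF adversary_profile_in_instances])
  finally show "ereal (1/4 * ln (real n)) \<le> comp_ratio A n" by simp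
qed

end
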